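(* Let $T$ be a leaf-positive ultrametric tree of radius $1$ with $n$ leaves, let $D$ be its leaf distance matrix, and let $c_T$ be the smallest nonnegative real number $c$ such that $c\,\mathbf{1}_{n\times n}-\frac12D$ is positive semidefinite. Then $c_T=1-\frac1n$ if and only if $T$ is a star-metric.
   Context: An ultrametric tree is a rooted tree with nonnegative edge lengths (zero lengths allowed) such that all leaves have the same distance from the root (the radius). The leaf distance matrix $D$ has $(i,j)$ entry the path-length distance between leaves $i,j$; $\mathbf{1}_{n\times n}$ is the all-ones matrix. The constant $c_T$ exists and satisfies $c_T\le 1-\frac1n$, since the set of such $c$ is closed and contains $1-\frac1n$ but not $0$. The height $H(v)$ of a vertex is the distance from $v$ to its furthest descendant, and $i\vee j$ is the lowest common ancestor of distinct vertices $i,j$. $T$ is leaf-positive if every edge adjacent to a leaf has positive length. $T$ is a star-metric if for any two distinct leaves $i,j$, $H(i\vee j)\in\{0,1\}$. *)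

theory Defs
  imports Complex_Main
begin

text \<open>A finite rooted tree with vertex set V, root r, parent map and
  edge lengths: len v is the length of the edge from v to its parent
  (for v distinct from the root).\<close>

definition rooted_tree :: "'v set \<Rightarrow> 'v \<Rightarrow> ('v \<Rightarrow> 'v) \<Rightarrow> bool" where
  "rooted_tree V r parent \<longleftrightarrow> finite V \<and> r \<in> V \<and> parent r = r \<and>
     (\<forall>v\<in>V. parent v \<in> V \<and> (\<exists>k. (parent ^^ k) v = r))"

definition ancestors :: "('v \<Rightarrow> 'v) \<Rightarrow> 'v \<Rightarrow> 'v set" where
  "ancestors parent v = {(parent ^^ k) v | k. True}"

text \<open>Edges on the path from v to the root, each edge identified with its lower endpoint.\<close>
definition path_edges :: "'v \<Rightarrow> ('v \<Rightarrow> 'v) \<Rightarrow> 'v \<Rightarrow> 'v set" where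
  "path_edges r parent v = {u \<in> ancestors parent v. u \<noteq> r}"

definition leaves :: "'v set \<Rightarrow> 'v \<Rightarrow> ('v \<Rightarrow> 'v) \<Rightarrow> 'v set" where
  "leaves V r parent = {v \<in> V. \<not> (\<exists>u\<in>V. u \<noteq> r \<and> parent u = v)}"

definition depth :: "'v \<Rightarrow> ('v \<Rightarrow> 'v) \<Rightarrow> ('v \<Rightarrow> real) \<Rightarrow> 'v \<Rightarrow> real" where
  "depth r parent len v = (\<Sum>e\<in>path_edges r parent v. len e)"

definition tdist :: "'v \<Rightarrow> ('v \<Rightarrow> 'v) \<Rightarrow> ('v \<Rightarrow> real) \<Rightarrow> 'v \<Rightarrow> 'v \<Rightarrow> real" where
  "tdist r parent len u w =
     (\<Sum>e\<in>path_edges r parent u - path_edges r parent w. len e) +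
     (\<Sum>e\<in>path_edges r parent w - path_edges r parent u. len e)"

definition ultrametric_tree :: "'v set \<Rightarrow> 'v \<Rightarrow> ('v \<Rightarrow> 'v) \<Rightarrow> ('v \<Rightarrow> real) \<Rightarrow> real \<Rightarrow> bool" where
  "ultrametric_tree V r parent len R \<longleftrightarrow> rooted_tree V r parent \<and>
     (\<forall>v\<in>V. v \<noteq> r \<longrightarrow> len v \<ge> 0) \<and>
     (\<forall>l\<in>leaves V r parent. depth r parent len l = R)"

definition leaf_positive :: "'v set \<Rightarrow> 'v \<Rightarrow> ('v \<Rightarrow> 'v) \<Rightarrow> ('v \<Rightarrow> real) \<Rightarrow> bool" where
  "leaf_positive V r parent len \<longleftrightarrow> (\<forall>l\<in>leaves V r parent. l \<noteq> r \<longrightarrow> len l > 0)"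

definition height :: "'v set \<Rightarrow> 'v \<Rightarrow> ('v \<Rightarrow> 'v) \<Rightarrow> ('v \<Rightarrow> real) \<Rightarrow> 'v \<Rightarrow> real" where
  "height V r parent len v = Max {tdist r parent len v u | u. u \<in> V \<and> v \<in> ancestors parent u}"

definition lca :: "('v \<Rightarrow> 'v) \<Rightarrow> 'v \<Rightarrow> 'v \<Rightarrow> 'v" where
  "lca parent i j = (THE u. u \<in> ancestors parent i \<inter> ancestors parent j \<and>
      (\<forall>w \<in> ancestors parent i \<inter> ancestors parent j. w \<in> ancestors parent u))"

definition star_metric :: "'v set \<Rightarrow> 'v \<Rightarrow> ('v \<Rightarrow> 'v) \<Rightarrow> ('v \<Rightarrow> real) \<Rightarrow> bool" where
  "star_metric V r parent len \<longleftrightarrow>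
     (\<forall>i\<in>leaves V r parent. \<forall>j\<in>leaves V r parent. i \<noteq> j \<longrightarrow>
        height V r parent len (lca parent i j) \<in> {0, 1})"

definition psd_on :: "'i set \<Rightarrow> ('i \<Rightarrow> 'i \<Rightarrow> real) \<Rightarrow> bool" where
  "psd_on I A \<longleftrightarrow> (\<forall>x :: 'i \<Rightarrow> real. (\<Sum>i\<in>I. \<Sum>j\<in>I. x i * A i j * x j) \<ge> 0)"

definition cT :: "'v set \<Rightarrow> 'v \<Rightarrow> ('v \<Rightarrow> 'v) \<Rightarrow> ('v \<Rightarrow> real) \<Rightarrow> real" where
  "cT V r parent len = Inf {c. c \<ge> 0 \<and>
      psd_on (leaves V r parent) (\<lambda>i j. c - tdist r parent len i j / 2)}"

end

theory Submission
  imports Defs "HOL-Analysis.Convex"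
begin

text \<open>
  For leaves i and j let A i j be the length of the common part of their root paths, so that
  d(i,j) = 2 - 2 A i j. Summing over edges e, with X e the sum of x i over the leaves below e,
  the quadratic form of c 1 - D/2 becomes (c - 1) (\<Sum>i. x i)^2 + \<Sum>e. len e (X e)^2.
  Since \<Sum>i. x i = \<Sum>e. len e X e, Cauchy-Schwarz makes it nonnegative once c \<ge> 1 - 1/L,
  where L is the total edge length. Counting edges with multiplicity shows L \<le> n, with equality
  iff no edge of positive length lies above two leaves, i.e. iff T is a star-metric; in that case
  the all-ones vector shows that no c < 1 - 1/n works, while otherwise c_T \<le> 1 - 1/L < 1 - 1/n.
\<close>

lemma weighted_Cauchy_Schwarz_sum:
  fixes w X :: "'e \<Rightarrow> real"
  assumes "\<And>e. e \<in> E \<Longrightarrow> 0 \<le> w e"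
  shows "(\<Sum>e\<in>E. w e * X e)\<^sup>2 \<le> (\<Sum>e\<in>E. w e) * (\<Sum>e\<in>E. w e * (X e)\<^sup>2)"
proof -
  have "(\<Sum>e\<in>E. w e * X e) = (\<Sum>e\<in>E. sqrt (w e) * (sqrt (w e) * X e))"
    "(\<Sum>e\<in>E. w e) = (\<Sum>e\<in>E. (sqrt (w e))\<^sup>2)"
    "(\<Sum>e\<in>E. w e * (X e)\<^sup>2) = (\<Sum>e\<in>E. (sqrt (w e) * X e)\<^sup>2)"
    using assms by (auto intro!: sum.cong simp: power_mult_distrib simp flip: power2_eq_square)
  then show ?thesis using Cauchy_Schwarz_ineq_sum by metis
qed

lemma psd_on_cong:
  "(\<And>i j. i \<in> I \<Longrightarrow> j \<in> I \<Longrightarrow> A i j = B i j) \<Longrightarrow> psd_on I A \<longleftrightarrow> psd_on I B"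
  unfolding psd_on_def by (simp cong: sum.cong)

lemma psd_on_imp_sum_nonneg: "psd_on I A \<Longrightarrow> 0 \<le> (\<Sum>i\<in>I. \<Sum>j\<in>I. A i j)"
  unfolding psd_on_def by (drule spec[of _ "\<lambda>_. 1"]) simp

locale set_family =
  fixes I :: "'i set" and P :: "'i \<Rightarrow> 'e set"
  assumes finite_I: "finite I" and finite_P: "\<And>i. i \<in> I \<Longrightarrow> finite (P i)"
begin

lemma finite_Union_P: "finite (\<Union>(P ` I))"
  using finite_I finite_P by blast

lemma card_containing_ge_1:
  assumes "e \<in> \<Union>(P ` I)"
  shows "1 \<le> card {i\<in>I. e \<in> P i}"
proof -
  have "{i\<in>I. e \<in> P i} \<noteq> {}" using assms by blast
  then have "0 < card {i\<in>I. e \<in> P i}" using finite_I by (simp add: card_gt_0_iff)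
  then show ?thesis by simp
qed

lemma sum_weight_swap:
  fixes x :: "'i \<Rightarrow> real" and w :: "'e \<Rightarrow> real"
  shows "(\<Sum>i\<in>I. x i * (\<Sum>e\<in>P i. w e)) = (\<Sum>e\<in>\<Union>(P ` I). w e * (\<Sum>i\<in>{i\<in>I. e \<in> P i}. x i))"
proof -
  have "(\<Sum>i\<in>I. x i * (\<Sum>e\<in>P i. w e)) = (\<Sum>i\<in>I. \<Sum>e\<in>{e. e \<in> \<Union>(P ` I) \<and> e \<in> P i}. x i * w e)"
  proof (rule sum.cong)
    fix i assume "i \<in> I"
    then have "{e. e \<in> \<Union>(P ` I) \<and> e \<in> P i} = P i" by blast
    then show "x i * (\<Sum>e\<in>P i. w e) = (\<Sum>e\<in>{e. e \<in> \<Union>(P ` I) \<and> e \<in> P i}. x i * w e)"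
      by (simp add: sum_distrib_left)
  qed simp
  also have "\<dots> = (\<Sum>e\<in>\<Union>(P ` I). \<Sum>i\<in>{i. i \<in> I \<and> e \<in> P i}. x i * w e)"
    using sum.swap_restrict[OF finite_I finite_Union_P] .
  finally show ?thesis by (simp add: sum_distrib_left mult.commute)
qed

lemma overlap_form_eq_sum_squares:
  fixes x :: "'i \<Rightarrow> real" and w :: "'e \<Rightarrow> real"
  shows "(\<Sum>i\<in>I. \<Sum>j\<in>I. x i * (\<Sum>e\<in>P i \<inter> P j. w e) * x j)
    = (\<Sum>e\<in>\<Union>(P ` I). w e * (\<Sum>i\<in>{i\<in>I. e \<in> P i}. x i)\<^sup>2)"
proof -
  define X where "X e = (\<Sum>i\<in>{i\<in>I. e \<in> P i}. x i)" for e
  have inner: "(\<Sum>j\<in>I. (\<Sum>e\<in>P i \<inter> P j. w e) * x j) = (\<Sum>e\<in>P i. w e * X e)"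
    if "i \<in> I" for i
  proof -
    have "(\<Sum>e\<in>P i. w e * X e) = (\<Sum>e\<in>P i. \<Sum>j\<in>{j. j \<in> I \<and> e \<in> P j}. w e * x j)"
      unfolding X_def sum_distrib_left by simp
    also have "\<dots> = (\<Sum>j\<in>I. \<Sum>e\<in>{e. e \<in> P i \<and> e \<in> P j}. w e * x j)"
      by (rule sum.swap_restrict[OF finite_P[OF that] finite_I])
    finally show ?thesis by (simp add: sum_distrib_right Int_def)
  qed
  have "(\<Sum>i\<in>I. \<Sum>j\<in>I. x i * (\<Sum>e\<in>P i \<inter> P j. w e) * x j)
      = (\<Sum>i\<in>I. x i * (\<Sum>e\<in>P i. w e * X e))"
  proof (rule sum.cong)
    fix i assume "i \<in> I"
    have "(\<Sum>j\<in>I. x i * (\<Sum>e\<in>P i \<inter> P j. w e) * x j)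
        = x i * (\<Sum>j\<in>I. (\<Sum>e\<in>P i \<inter> P j. w e) * x j)"
      by (simp add: sum_distrib_left sum_distrib_right mult.assoc)
    then show "(\<Sum>j\<in>I. x i * (\<Sum>e\<in>P i \<inter> P j. w e) * x j) = x i * (\<Sum>e\<in>P i. w e * X e)"
      using inner[OF \<open>i \<in> I\<close>] by simp
  qed simp
  also have "\<dots> = (\<Sum>e\<in>\<Union>(P ` I). w e * X e * X e)"
    unfolding sum_weight_swap X_def ..
  finally show ?thesis by (simp add: X_def power2_eq_square mult.assoc)
qed

end

locale unit_weight_family = set_family I P for I :: "'i set" and P :: "'i \<Rightarrow> 'e set" +
  fixes w :: "'e \<Rightarrow> real"
  assumes w_nonneg: "\<And>e. e \<in> \<Union>(P ` I) \<Longrightarrow> 0 \<le> w e"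
    and w_unit: "\<And>i. i \<in> I \<Longrightarrow> (\<Sum>e\<in>P i. w e) = 1"
begin

lemma psd_on_overlap_kernel:
  assumes c: "1 - 1 / (\<Sum>e\<in>\<Union>(P ` I). w e) \<le> c"
  shows "psd_on I (\<lambda>i j. c - 1 + (\<Sum>e\<in>P i \<inter> P j. w e))"
  unfolding psd_on_def
proof
  fix x :: "'i \<Rightarrow> real"
  define X where "X e = (\<Sum>i\<in>{i\<in>I. e \<in> P i}. x i)" for e
  define S where "S = (\<Sum>i\<in>I. x i)"
  define L where "L = (\<Sum>e\<in>\<Union>(P ` I). w e)"
  define Q where "Q = (\<Sum>e\<in>\<Union>(P ` I). w e * (X e)\<^sup>2)"
  have "(\<Sum>i\<in>I. \<Sum>j\<in>I. x i * (c - 1 + (\<Sum>e\<in>P i \<inter> P j. w e)) * x j)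
      = (\<Sum>i\<in>I. \<Sum>j\<in>I. (c - 1) * (x i * x j) + x i * (\<Sum>e\<in>P i \<inter> P j. w e) * x j)"
    by (intro sum.cong refl) (simp add: algebra_simps)
  also have "\<dots> = (c - 1) * (\<Sum>i\<in>I. \<Sum>j\<in>I. x i * x j)
      + (\<Sum>i\<in>I. \<Sum>j\<in>I. x i * (\<Sum>e\<in>P i \<inter> P j. w e) * x j)"
    by (simp add: sum.distrib sum_distrib_left)
  also have "\<dots> = (c - 1) * S\<^sup>2 + Q"
    by (simp add: S_def Q_def X_def overlap_form_eq_sum_squares power2_eq_square sum_product)
  finally have form: "(\<Sum>i\<in>I. \<Sum>j\<in>I. x i * (c - 1 + (\<Sum>e\<in>P i \<inter> P j. w e)) * x j)
      = (c - 1) * S\<^sup>2 + Q" .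
  have "S = (\<Sum>e\<in>\<Union>(P ` I). w e * X e)"
    using sum_weight_swap[of x w] w_unit by (simp add: S_def X_def)
  then have "S\<^sup>2 \<le> L * Q"
    unfolding L_def Q_def using weighted_Cauchy_Schwarz_sum[of "\<Union>(P ` I)" w X] w_nonneg by simp
  moreover have "0 \<le> Q" unfolding Q_def using w_nonneg by (intro sum_nonneg) simp
  moreover have "0 \<le> L" unfolding L_def using w_nonneg by (intro sum_nonneg) simp
  ultimately have "S\<^sup>2 / L \<le> Q"
    by (cases "L = 0") (simp_all add: pos_divide_le_eq mult.commute)
  moreover have "0 \<le> (c - 1 + 1 / L) * S\<^sup>2" using c by (simp add: L_def)
  ultimately show "0 \<le> (\<Sum>i\<in>I. \<Sum>j\<in>I. x i * (c - 1 + (\<Sum>e\<in>P i \<inter> P j. w e)) * x j)"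
    unfolding form by (simp add: algebra_simps)
qed

lemma card_eq_sum_weight_multiplicity:
  "real (card I) = (\<Sum>e\<in>\<Union>(P ` I). w e * real (card {i\<in>I. e \<in> P i}))"
proof -
  have "real (card I) = (\<Sum>i\<in>I. 1 * (\<Sum>e\<in>P i. w e))"
    using w_unit by simp
  also have "\<dots> = (\<Sum>e\<in>\<Union>(P ` I). w e * (\<Sum>i\<in>{i\<in>I. e \<in> P i}. 1))"
    by (rule sum_weight_swap)
  finally show ?thesis by simp
qed

lemma total_weight_le_card: "(\<Sum>e\<in>\<Union>(P ` I). w e) \<le> real (card I)"
proof -
  have "(\<Sum>e\<in>\<Union>(P ` I). w e) \<le> (\<Sum>e\<in>\<Union>(P ` I). w e * real (card {i\<in>I. e \<in> P i}))"
  proof (rule sum_mono)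
    fix e assume e: "e \<in> \<Union>(P ` I)"
    show "w e \<le> w e * real (card {i\<in>I. e \<in> P i})"
      using mult_left_mono[of 1 _ "w e"] w_nonneg[OF e] card_containing_ge_1[OF e] by simp
  qed
  then show ?thesis using card_eq_sum_weight_multiplicity by simp
qed

lemma total_weight_eq_card_iff:
  "(\<Sum>e\<in>\<Union>(P ` I). w e) = real (card I)
    \<longleftrightarrow> (\<forall>i\<in>I. \<forall>j\<in>I. i \<noteq> j \<longrightarrow> (\<Sum>e\<in>P i \<inter> P j. w e) = 0)"
proof -
  define N where "N e = real (card {i\<in>I. e \<in> P i})" for e
  have N_ge_1: "1 \<le> N e" if "e \<in> \<Union>(P ` I)" for e
    using card_containing_ge_1[OF that] by (simp add: N_def)
  have "real (card I) - (\<Sum>e\<in>\<Union>(P ` I). w e) = (\<Sum>e\<in>\<Union>(P ` I). w e * (N e - 1))"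
    using card_eq_sum_weight_multiplicity by (simp add: N_def algebra_simps sum_subtractf)
  then have "(\<Sum>e\<in>\<Union>(P ` I). w e) = real (card I) \<longleftrightarrow> (\<forall>e\<in>\<Union>(P ` I). w e * (N e - 1) = 0)"
    using sum_nonneg_eq_0_iff[OF finite_Union_P, of "\<lambda>e. w e * (N e - 1)"] w_nonneg N_ge_1
    by auto
  also have "\<dots> \<longleftrightarrow> (\<forall>e\<in>\<Union>(P ` I). \<forall>i\<in>I. \<forall>j\<in>I. i \<noteq> j \<longrightarrow> e \<in> P i \<inter> P j \<longrightarrow> w e = 0)"
  proof (rule ball_cong[OF refl])
    fix e assume e: "e \<in> \<Union>(P ` I)"
    have "N e = 1 \<longleftrightarrow> (\<forall>i\<in>I. \<forall>j\<in>I. i \<noteq> j \<longrightarrow> e \<notin> P i \<inter> P j)"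
      using N_ge_1[OF e] card_le_Suc0_iff_eq[of "{i\<in>I. e \<in> P i}"] finite_I
      unfolding N_def by auto
    then show "w e * (N e - 1) = 0 \<longleftrightarrow> (\<forall>i\<in>I. \<forall>j\<in>I. i \<noteq> j \<longrightarrow> e \<in> P i \<inter> P j \<longrightarrow> w e = 0)"
      by auto
  qed
  also have "\<dots> \<longleftrightarrow> (\<forall>i\<in>I. \<forall>j\<in>I. i \<noteq> j \<longrightarrow> (\<Sum>e\<in>P i \<inter> P j. w e) = 0)"
  proof -
    have "(\<Sum>e\<in>P i \<inter> P j. w e) = 0 \<longleftrightarrow> (\<forall>e\<in>P i \<inter> P j. w e = 0)" if "i \<in> I" for i j
      using that finite_P w_nonneg by (intro sum_nonneg_eq_0_iff) auto
    then show ?thesis by auto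
  qed
  finally show ?thesis .
qed

end

lemma ancestors_iff: "u \<in> ancestors parent v \<longleftrightarrow> (\<exists>k. u = (parent ^^ k) v)"
  by (auto simp: ancestors_def)

lemma self_in_ancestors: "v \<in> ancestors parent v"
  unfolding ancestors_iff by (metis funpow_0)

lemma ancestors_trans:
  "u \<in> ancestors parent v \<Longrightarrow> w \<in> ancestors parent u \<Longrightarrow> w \<in> ancestors parent v"
  unfolding ancestors_iff by (metis funpow_add comp_apply)

lemma ancestors_eq_insert_parent:
  "ancestors parent v = insert v (ancestors parent (parent v))"
proof (rule set_eqI)
  fix u
  have "(\<exists>k. u = (parent ^^ k) v) \<longleftrightarrow> u = v \<or> (\<exists>k. u = (parent ^^ Suc k) v)"
    by (metis funpow_0 not0_implies_Suc)
  then show "u \<in> ancestors parent v \<longleftrightarrow> u \<in> insert v (ancestors parent (parent v))"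
    by (simp add: ancestors_iff funpow_Suc_right del: funpow.simps)
qed

locale tree =
  fixes V :: "'v set" and r :: 'v and parent :: "'v \<Rightarrow> 'v"
  assumes rooted_tree: "rooted_tree V r parent"
begin

lemma finite_V: "finite V" and root_in_V: "r \<in> V" and parent_root: "parent r = r"
  and parent_in_V: "v \<in> V \<Longrightarrow> parent v \<in> V"
  and reaches_root: "v \<in> V \<Longrightarrow> \<exists>k. (parent ^^ k) v = r"
  using rooted_tree by (auto simp: rooted_tree_def)

lemma funpow_parent_in_V: "v \<in> V \<Longrightarrow> (parent ^^ k) v \<in> V"
  by (induction k) (auto simp: parent_in_V)

lemma funpow_parent_root: "(parent ^^ k) r = r"
  by (induction k) (auto simp: parent_root)

lemma ancestors_subset_V: "v \<in> V \<Longrightarrow> ancestors parent v \<subseteq> V"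
  using funpow_parent_in_V by (auto simp: ancestors_iff)

lemma ancestors_root: "ancestors parent r = {r}"
  using funpow_parent_root by (auto simp: ancestors_iff)

lemma root_in_ancestors: "v \<in> V \<Longrightarrow> r \<in> ancestors parent v"
  using reaches_root by (auto simp: ancestors_iff)

lemma periodic_imp_root:
  assumes "v \<in> V" "(parent ^^ m) v = v" "0 < m"
  shows "v = r"
proof -
  obtain k where k: "(parent ^^ k) v = r" using reaches_root[OF assms(1)] by blast
  have periodic: "(parent ^^ (m * q)) v = v" for q
    by (induction q) (simp_all add: funpow_add assms(2))
  have "m * k = (m * k - k) + k" using assms(3) by simp
  then have "v = (parent ^^ (m * k - k)) ((parent ^^ k) v)"
    by (metis periodic funpow_add comp_apply)
  then show ?thesis using k funpow_parent_root by simp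
qed

lemma ancestors_antisym:
  assumes "u \<in> V" "u \<in> ancestors parent w" "w \<in> ancestors parent u"
  shows "u = w"
proof -
  obtain a b where a: "u = (parent ^^ a) w" and b: "w = (parent ^^ b) u"
    using assms(2,3) by (auto simp: ancestors_iff)
  show ?thesis
  proof (cases "a + b = 0")
    case False
    have "(parent ^^ (a + b)) u = u" using a b by (simp add: funpow_add)
    then have "u = r" using periodic_imp_root[OF assms(1)] False by simp
    then show ?thesis using b funpow_parent_root by simp
  qed (use a in simp)
qed

lemma lca_ancestors:
  assumes "v \<in> V" "w \<in> V"
  shows "lca parent v w \<in> ancestors parent v \<inter> ancestors parent w"
    and "z \<in> ancestors parent v \<inter> ancestors parent w \<Longrightarrow> z \<in> ancestors parent (lca parent v w)"
proof -
  let ?C = "ancestors parent v \<inter> ancestors parent w"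
  obtain j where "r = (parent ^^ j) v"
    using root_in_ancestors[OF assms(1)] unfolding ancestors_iff by blast
  then have j: "(parent ^^ j) v \<in> ancestors parent w" using root_in_ancestors[OF assms(2)] by simp
  define k where "k = (LEAST k. (parent ^^ k) v \<in> ancestors parent w)"
  have k: "(parent ^^ k) v \<in> ancestors parent w"
    unfolding k_def using j by (rule LeastI)
  have k_least: "k \<le> m" if "(parent ^^ m) v \<in> ancestors parent w" for m
    unfolding k_def using that by (rule Least_le)
  define u where "u = (parent ^^ k) v"
  have "u \<in> ancestors parent v" unfolding u_def ancestors_iff by blast
  with k have u_common: "u \<in> ?C" unfolding u_def by blast
  have u_lowest: "z \<in> ancestors parent u" if z: "z \<in> ?C" for z
  proof -
    obtain m where m: "z = (parent ^^ m) v" using IntD1[OF z] unfolding ancestors_iff by blast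
    then have "k \<le> m" using z by (intro k_least) simp
    then have "z = (parent ^^ (m - k)) u"
      unfolding m u_def by (metis funpow_add comp_apply le_add_diff_inverse2)
    then show ?thesis unfolding ancestors_iff by blast
  qed
  have "u \<in> V" using u_common ancestors_subset_V[OF assms(1)] by blast
  then have "\<exists>!u. u \<in> ?C \<and> (\<forall>z\<in>?C. z \<in> ancestors parent u)"
    using u_common u_lowest ancestors_antisym[of u] by (intro ex1I[of _ u]) auto
  then have "lca parent v w \<in> ?C \<and> (\<forall>z\<in>?C. z \<in> ancestors parent (lca parent v w))"
    unfolding lca_def by (rule theI')
  then show "lca parent v w \<in> ?C" "z \<in> ?C \<Longrightarrow> z \<in> ancestors parent (lca parent v w)"
    by auto
qed

lemma lca_in_V: "v \<in> V \<Longrightarrow> w \<in> V \<Longrightarrow> lca parent v w \<in> V"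
  using lca_ancestors(1) ancestors_subset_V by (meson IntD1 subsetD)

lemma notin_ancestors_parent:
  assumes "c \<in> V" "c \<noteq> r"
  shows "c \<notin> ancestors parent (parent c)"
proof
  assume "c \<in> ancestors parent (parent c)"
  then obtain k where "c = (parent ^^ k) (parent c)" unfolding ancestors_iff by blast
  then have "(parent ^^ Suc k) c = c" by (simp only: funpow_Suc_right comp_apply)
  then show False using periodic_imp_root[OF assms(1)] assms(2) by blast
qed

lemma leaf_in_V: "l \<in> leaves V r parent \<Longrightarrow> l \<in> V"
  by (simp add: leaves_def)

lemma ex_leaf_below: "u \<in> V \<Longrightarrow> \<exists>l\<in>leaves V r parent. u \<in> ancestors parent l"
proof (induction u rule: measure_induct_rule[where f = "\<lambda>u. card V - card (ancestors parent u)"])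
  case (less u)
  show ?case
  proof (cases "u \<in> leaves V r parent")
    case False
    then obtain c where c: "c \<in> V" "c \<noteq> r" "parent c = u"
      using less.prems unfolding leaves_def by blast
    have anc_c: "ancestors parent c = insert c (ancestors parent u)"
      using ancestors_eq_insert_parent[of parent c] c(3) by simp
    have "finite (ancestors parent u)"
      using finite_subset[OF ancestors_subset_V[OF less.prems] finite_V] .
    then have "card (ancestors parent u) < card (ancestors parent c)"
      using notin_ancestors_parent[OF c(1,2)] c(3) anc_c by simp
    moreover have "card (ancestors parent c) \<le> card V"
      using card_mono[OF finite_V ancestors_subset_V[OF c(1)]] .
    ultimately have "card V - card (ancestors parent c) < card V - card (ancestors parent u)"
      by linarith
    then obtain l where "l \<in> leaves V r parent" "c \<in> ancestors parent l"
      using less.IH[OF _ c(1)] by blast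
    moreover have "u \<in> ancestors parent c" by (simp add: anc_c self_in_ancestors)
    ultimately show ?thesis using ancestors_trans[of c parent l u] by blast
  qed (use self_in_ancestors[of u parent] in blast)
qed

lemma leaves_nonempty: "leaves V r parent \<noteq> {}"
  using ex_leaf_below[OF root_in_V] by blast

lemma leaf_notin_ancestors:
  assumes "l \<in> leaves V r parent" "l \<noteq> r" "v \<in> V" "v \<noteq> l"
  shows "l \<notin> ancestors parent v"
proof
  assume "l \<in> ancestors parent v"
  then obtain k where k: "l = (parent ^^ k) v" by (auto simp: ancestors_iff)
  with assms(4) obtain k' where "k = Suc k'" by (cases k) auto
  define c where "c = (parent ^^ k') v"
  have c: "parent c = l" "c \<in> V"
    using k \<open>k = Suc k'\<close> funpow_parent_in_V[OF assms(3)] by (simp_all add: c_def)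
  then have "c \<noteq> r" using assms(2) parent_root by auto
  then show False using c assms(1) unfolding leaves_def by blast
qed

lemma path_edges_subset: "v \<in> V \<Longrightarrow> path_edges r parent v \<subseteq> V - {r}"
  using ancestors_subset_V by (auto simp: path_edges_def)

lemma finite_path_edges: "v \<in> V \<Longrightarrow> finite (path_edges r parent v)"
  using path_edges_subset finite_V finite_subset by blast

lemma path_edges_mono:
  "u \<in> ancestors parent v \<Longrightarrow> path_edges r parent u \<subseteq> path_edges r parent v"
  using ancestors_trans by (auto simp: path_edges_def)

lemma path_edges_root: "path_edges r parent r = {}"
  using ancestors_root by (auto simp: path_edges_def)

lemma path_edges_lca:
  assumes "v \<in> V" "w \<in> V"
  shows "path_edges r parent (lca parent v w) = path_edges r parent v \<inter> path_edges r parent w"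
proof (rule set_eqI)
  fix e
  show "e \<in> path_edges r parent (lca parent v w) \<longleftrightarrow>
      e \<in> path_edges r parent v \<inter> path_edges r parent w"
    using lca_ancestors[OF assms] ancestors_trans[of "lca parent v w" parent _ e]
    unfolding path_edges_def mem_Collect_eq Int_iff by metis
qed

lemma finite_leaves: "finite (leaves V r parent)"
  using finite_V by (simp add: leaves_def)

lemma Union_leaf_paths: "\<Union>(path_edges r parent ` leaves V r parent) = V - {r}"
proof
  show "\<Union>(path_edges r parent ` leaves V r parent) \<subseteq> V - {r}"
    using path_edges_subset leaf_in_V by blast
next
  show "V - {r} \<subseteq> \<Union>(path_edges r parent ` leaves V r parent)"
  proof
    fix v assume v: "v \<in> V - {r}"
    then obtain l where "l \<in> leaves V r parent" "v \<in> ancestors parent l"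
      using ex_leaf_below by blast
    then show "v \<in> \<Union>(path_edges r parent ` leaves V r parent)"
      using v by (auto simp: path_edges_def)
  qed
qed

lemma depth_eq_add:
  assumes "v \<in> V" "u \<in> ancestors parent v"
  shows "depth r parent len v
    = depth r parent len u + (\<Sum>e\<in>path_edges r parent v - path_edges r parent u. len e)"
  unfolding depth_def
  using sum.subset_diff[OF path_edges_mono[OF assms(2)] finite_path_edges[OF assms(1)], of len]
  by linarith

lemma tdist_ancestor:
  assumes "v \<in> V" "u \<in> ancestors parent v"
  shows "tdist r parent len u v = depth r parent len v - depth r parent len u"
proof -
  have no_edges: "path_edges r parent u - path_edges r parent v = {}"
    using path_edges_mono[OF assms(2)] by blast
  show ?thesis using depth_eq_add[OF assms, of len] by (simp add: tdist_def no_edges)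
qed

lemma depth_lca:
  "v \<in> V \<Longrightarrow> w \<in> V \<Longrightarrow>
    depth r parent len (lca parent v w) = (\<Sum>e\<in>path_edges r parent v \<inter> path_edges r parent w. len e)"
  by (simp add: depth_def path_edges_lca)

lemma tdist_eq_depth_lca:
  assumes "v \<in> V" "w \<in> V"
  shows "tdist r parent len v w
    = depth r parent len v + depth r parent len w - 2 * depth r parent len (lca parent v w)"
proof -
  let ?P = "path_edges r parent"
  have "depth r parent len v = (\<Sum>e\<in>?P v \<inter> ?P w. len e) + (\<Sum>e\<in>?P v - ?P w. len e)"
    "depth r parent len w = (\<Sum>e\<in>?P v \<inter> ?P w. len e) + (\<Sum>e\<in>?P w - ?P v. len e)"
    using sum.Int_Diff[OF finite_path_edges[OF assms(1)], of len "?P w"]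
      sum.Int_Diff[OF finite_path_edges[OF assms(2)], of len "?P v"]
    by (simp_all add: depth_def Int_commute)
  then show ?thesis by (simp add: tdist_def depth_lca[OF assms])
qed

end

locale ultrametric =
  fixes V :: "'v set" and r :: 'v and parent :: "'v \<Rightarrow> 'v" and len :: "'v \<Rightarrow> real"
    and R :: real
  assumes ultrametric_tree: "ultrametric_tree V r parent len R"
begin

sublocale tree V r parent
  using ultrametric_tree by unfold_locales (simp add: ultrametric_tree_def)

lemma len_nonneg: "v \<in> V \<Longrightarrow> v \<noteq> r \<Longrightarrow> 0 \<le> len v"
  and depth_leaf: "l \<in> leaves V r parent \<Longrightarrow> depth r parent len l = R"
  using ultrametric_tree by (simp_all add: ultrametric_tree_def)

lemma depth_mono:
  assumes "v \<in> V" "u \<in> ancestors parent v"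
  shows "depth r parent len u \<le> depth r parent len v"
proof -
  have "0 \<le> (\<Sum>e\<in>path_edges r parent v - path_edges r parent u. len e)"
    using path_edges_subset[OF assms(1)] len_nonneg by (intro sum_nonneg) auto
  then show ?thesis using depth_eq_add[OF assms, of len] by simp
qed

lemma height_eq:
  assumes "v \<in> V"
  shows "height V r parent len v = R - depth r parent len v"
  unfolding height_def
proof (rule Max_eqI)
  show "finite {tdist r parent len v u |u. u \<in> V \<and> v \<in> ancestors parent u}"
    using finite_V by simp
next
  fix y assume "y \<in> {tdist r parent len v u |u. u \<in> V \<and> v \<in> ancestors parent u}"
  then obtain u where u: "u \<in> V" "v \<in> ancestors parent u" "y = tdist r parent len v u" by blast
  obtain l where l: "l \<in> leaves V r parent" "u \<in> ancestors parent l" using ex_leaf_below[OF u(1)] by blast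
  have "depth r parent len u \<le> R"
    using depth_mono[OF leaf_in_V l(2)] depth_leaf l(1) by simp
  then show "y \<le> R - depth r parent len v" using u tdist_ancestor by simp
next
  obtain l where l: "l \<in> leaves V r parent" "v \<in> ancestors parent l"
    using ex_leaf_below[OF assms] by blast
  then have "tdist r parent len v l = R - depth r parent len v"
    using tdist_ancestor[OF leaf_in_V] depth_leaf by simp
  then show "R - depth r parent len v \<in> {tdist r parent len v u |u. u \<in> V \<and> v \<in> ancestors parent u}"
    using leaf_in_V[OF l(1)] l(2) by force
qed

lemma tdist_leaves:
  assumes "i \<in> leaves V r parent" "j \<in> leaves V r parent"
  shows "tdist r parent len i j = 2 * R - 2 * depth r parent len (lca parent i j)"
  using tdist_eq_depth_lca[OF leaf_in_V[OF assms(1)] leaf_in_V[OF assms(2)]] depth_leaf assms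
  by simp

lemma depth_lca_less_radius:
  assumes "0 < R" "leaf_positive V r parent len"
    and "i \<in> leaves V r parent" "j \<in> leaves V r parent" "i \<noteq> j"
  shows "depth r parent len (lca parent i j) < R"
proof -
  have V: "i \<in> V" "j \<in> V" using leaf_in_V assms(3,4) by simp_all
  have "i \<noteq> r" using depth_leaf[OF assms(3)] assms(1) path_edges_root by (auto simp: depth_def)
  then have "i \<in> path_edges r parent i - path_edges r parent j"
    using leaf_notin_ancestors[OF assms(3) _ V(2)] assms(5) self_in_ancestors[of i parent]
    by (auto simp: path_edges_def)
  then have "len i \<le> (\<Sum>e\<in>path_edges r parent i - path_edges r parent j. len e)"
    using finite_path_edges[OF V(1)] path_edges_subset[OF V(1)] len_nonneg
    by (intro member_le_sum) auto
  moreover have "0 < len i" using assms(2,3) \<open>i \<noteq> r\<close> by (simp add: leaf_positive_def)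
  moreover have "R = depth r parent len (lca parent i j)
      + (\<Sum>e\<in>path_edges r parent i - path_edges r parent j. len e)"
    using depth_eq_add[OF V(1) lca_ancestors(1)[OF V, THEN IntD1], of len]
    by (simp add: path_edges_lca[OF V] depth_leaf[OF assms(3)] Diff_Int)
  ultimately show ?thesis by linarith
qed

end

lemma unit_weight_family_leaf_paths:
  assumes "ultrametric_tree V r parent len 1"
  shows "unit_weight_family (leaves V r parent) (path_edges r parent) len"
proof -
  interpret ultrametric V r parent len 1 by (rule ultrametric.intro) (fact assms)
  show ?thesis
  proof (unfold_locales)
    show "finite (leaves V r parent)" by (rule finite_leaves)
    show "finite (path_edges r parent l)" if "l \<in> leaves V r parent" for l
      using finite_path_edges leaf_in_V that by blast
    show "0 \<le> len e" if "e \<in> \<Union>(path_edges r parent ` leaves V r parent)" for e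
      using len_nonneg that by (simp add: Union_leaf_paths)
    show "(\<Sum>e\<in>path_edges r parent l. len e) = 1" if "l \<in> leaves V r parent" for l
      using depth_leaf that by (simp add: depth_def)
  qed
qed

context
  fixes V :: "'v set" and r :: 'v and parent :: "'v \<Rightarrow> 'v" and len :: "'v \<Rightarrow> real"
  assumes radius_1: "ultrametric_tree V r parent len 1"
begin

interpretation ultrametric V r parent len 1
  by (rule ultrametric.intro) (fact radius_1)

interpretation unit_weight_family "leaves V r parent" "path_edges r parent" len
  by (rule unit_weight_family_leaf_paths) (fact radius_1)

lemma total_length_ge_1: "1 \<le> (\<Sum>v\<in>V - {r}. len v)"
proof -
  obtain l where l: "l \<in> leaves V r parent" using leaves_nonempty by blast
  have "(\<Sum>e\<in>path_edges r parent l. len e) \<le> (\<Sum>v\<in>V - {r}. len v)"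
    using l len_nonneg path_edges_subset[OF leaf_in_V[OF l]] finite_V
    by (intro sum_mono2) auto
  then show ?thesis using w_unit[OF l] by simp
qed

lemma total_length_le_card: "(\<Sum>v\<in>V - {r}. len v) \<le> real (card (leaves V r parent))"
  using total_weight_le_card by (simp add: Union_leaf_paths)

lemma total_length_eq_card_iff:
  "(\<Sum>v\<in>V - {r}. len v) = real (card (leaves V r parent))
    \<longleftrightarrow> (\<forall>i\<in>leaves V r parent. \<forall>j\<in>leaves V r parent. i \<noteq> j \<longrightarrow>
          depth r parent len (lca parent i j) = 0)"
  using total_weight_eq_card_iff by (simp add: Union_leaf_paths depth_lca leaf_in_V)

lemma leaf_kernel_eq_overlap:
  assumes "i \<in> leaves V r parent" "j \<in> leaves V r parent"
  shows "c - tdist r parent len i j / 2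
    = c - 1 + (\<Sum>e\<in>path_edges r parent i \<inter> path_edges r parent j. len e)"
  using tdist_leaves[OF assms] depth_lca[OF leaf_in_V[OF assms(1)] leaf_in_V[OF assms(2)]]
  by (simp add: field_simps)

lemma psd_on_leaf_kernel:
  assumes "1 - 1 / (\<Sum>v\<in>V - {r}. len v) \<le> c"
  shows "psd_on (leaves V r parent) (\<lambda>i j. c - tdist r parent len i j / 2)"
  using psd_on_overlap_kernel[of c] assms
  by (simp add: Union_leaf_paths leaf_kernel_eq_overlap cong: psd_on_cong)

lemma total_length_bound_admissible:
  "1 - 1 / (\<Sum>v\<in>V - {r}. len v)
    \<in> {c. 0 \<le> c \<and> psd_on (leaves V r parent) (\<lambda>i j. c - tdist r parent len i j / 2)}"
  using total_length_ge_1 psd_on_leaf_kernel by simp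

lemma cT_le_total_length: "cT V r parent len \<le> 1 - 1 / (\<Sum>v\<in>V - {r}. len v)"
  unfolding cT_def using total_length_bound_admissible
  by (rule cInf_lower) (auto intro: bdd_belowI[of _ 0])

lemma cT_ge_if_lca_depths_zero:
  assumes "\<forall>i\<in>leaves V r parent. \<forall>j\<in>leaves V r parent. i \<noteq> j \<longrightarrow>
      depth r parent len (lca parent i j) = 0"
  shows "1 - 1 / real (card (leaves V r parent)) \<le> cT V r parent len"
  unfolding cT_def
proof (rule cInf_greatest)
  show "{c. 0 \<le> c \<and> psd_on (leaves V r parent) (\<lambda>i j. c - tdist r parent len i j / 2)} \<noteq> {}"
    using total_length_bound_admissible by blast
next
  let ?n = "real (card (leaves V r parent))"
  fix c assume "c \<in> {c. 0 \<le> c \<and> psd_on (leaves V r parent) (\<lambda>i j. c - tdist r parent len i j / 2)}"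
  then have "0 \<le> (\<Sum>i\<in>leaves V r parent. \<Sum>j\<in>leaves V r parent. c - tdist r parent len i j / 2)"
    using psd_on_imp_sum_nonneg by blast
  also have "\<dots> = (\<Sum>i\<in>leaves V r parent. \<Sum>j\<in>leaves V r parent. (c - 1) + (if j = i then 1 else 0))"
  proof (intro sum.cong refl)
    fix i j assume i: "i \<in> leaves V r parent" and j: "j \<in> leaves V r parent"
    show "c - tdist r parent len i j / 2 = (c - 1) + (if j = i then 1 else 0)"
    proof (cases "j = i")
      case False
      then show ?thesis using tdist_leaves[OF i j] assms i j by simp
    qed (simp add: tdist_def)
  qed
  also have "\<dots> = ?n * (?n * (c - 1) + 1)"
    using finite_leaves by (simp add: sum.distrib)
  finally have "0 \<le> ?n * (c - 1) + 1"
    using leaves_nonempty finite_leaves by (simp add: zero_le_mult_iff card_gt_0_iff)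
  then show "1 - 1 / ?n \<le> c"
    using leaves_nonempty finite_leaves by (simp add: field_simps card_gt_0_iff)
qed

lemma star_metric_iff_lca_depths_zero:
  assumes "leaf_positive V r parent len"
  shows "star_metric V r parent len \<longleftrightarrow>
    (\<forall>i\<in>leaves V r parent. \<forall>j\<in>leaves V r parent. i \<noteq> j \<longrightarrow>
      depth r parent len (lca parent i j) = 0)"
proof -
  have "height V r parent len (lca parent i j) \<in> {0, 1} \<longleftrightarrow> depth r parent len (lca parent i j) = 0"
    if "i \<in> leaves V r parent" "j \<in> leaves V r parent" "i \<noteq> j" for i j
    using height_eq[OF lca_in_V[OF leaf_in_V[OF that(1)] leaf_in_V[OF that(2)]]]
      depth_lca_less_radius[OF _ assms that] by auto
  then show ?thesis unfolding star_metric_def by blast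
qed

end

theorem proposition2p3:
  fixes V :: "'v set" and r :: 'v and parent :: "'v \<Rightarrow> 'v" and len :: "'v \<Rightarrow> real"
  assumes "ultrametric_tree V r parent len 1"
    and "leaf_positive V r parent len"
  shows "cT V r parent len = 1 - 1 / real (card (leaves V r parent))
     \<longleftrightarrow> star_metric V r parent len"
proof -
  let ?n = "real (card (leaves V r parent))" and ?L = "\<Sum>v\<in>V - {r}. len v"
  note star_iff = star_metric_iff_lca_depths_zero[OF assms]
  have L_ge_1: "1 \<le> ?L" and L_le_n: "?L \<le> ?n"
    using total_length_ge_1[OF assms(1)] total_length_le_card[OF assms(1)] .
  show ?thesis
  proof
    assume "cT V r parent len = 1 - 1 / ?n"
    then have "1 / ?L \<le> 1 / ?n" using cT_le_total_length[OF assms(1)] by simp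
    then have "?L = ?n" using L_ge_1 L_le_n by (simp add: divide_simps)
    then show "star_metric V r parent len"
      using star_iff total_length_eq_card_iff[OF assms(1)] by simp
  next
    assume "star_metric V r parent len"
    then have lca_depths_zero: "\<forall>i\<in>leaves V r parent. \<forall>j\<in>leaves V r parent. i \<noteq> j \<longrightarrow>
        depth r parent len (lca parent i j) = 0"
      using star_iff by simp
    then have "?L = ?n" using total_length_eq_card_iff[OF assms(1)] by simp
    then show "cT V r parent len = 1 - 1 / ?n"
      using cT_le_total_length[OF assms(1)] cT_ge_if_lca_depths_zero[OF assms(1) lca_depths_zero]
      by simp
  qed
qed

end
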